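(* Let $P_0=(|P_0|,\preccurlyeq_0)$ be a finite poset with $|P_0|=\{x_1,\dots,x_{m_0}\}$, and let $S\subseteq|P_0|$ be a chain. Fix nonnegative integer values of $m_i$ for all $i$ with $x_i\notin S$, and let $f$ be the polynomial with rational coefficients in the variables $(m_i)_{x_i\in S}$ such that $L_+(P_0;m_1,\dots,m_{m_0})=f((m_i)_{x_i\in S})$ for all nonnegative integer values of these variables. Then the total degree of $f$ equals $\sum m_i$, summed over those $i$ such that $x_i$ is $\preccurlyeq_0$-incomparable with at least one element of $S$.
   Context: For nonnegative integers $m_1,\dots,m_{m_0}$ let $C_1,\dots,C_{m_0}$ be pairwise disjoint chains, $C_i$ being $x_{i,1}<\dots<x_{i,m_i}$. The lexicographic sum $P=P_0*(C_1,\dots,C_{m_0})$ is the poset on $\bigcup_i|C_i|$ with $x_{i,j}\preccurlyeq x_{i',j'}$ iff either $i\ne i'$ and $x_i\preccurlyeq_0x_{i'}$, or $i=i'$ and $j\le j'$. $L_+(P_0;m_1,\dots,m_{m_0})$ is the number of linearizations (total orders refining $\preccurlyeq$) of $P$. When $S$ is a chain, such a polynomial $f$ exists and is unique. The total degree of a multivariable polynomial is the maximum over its monomials of the sum of the exponents. *)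

theory Defs
  imports Complex_Main "HOL-Library.Poly_Mapping"
begin

text \<open>Poset P0 on the index set {..<m0} (0-based indices: index i stands for x_(i+1)),
  given as a relation r0 (a partial order on {..<m0}).\<close>

definition lexsum_carrier :: "nat \<Rightarrow> (nat \<Rightarrow> nat) \<Rightarrow> (nat \<times> nat) set" where
  "lexsum_carrier m0 m = {(i, j). i < m0 \<and> j < m i}"

definition lexsum_rel :: "(nat \<times> nat) set \<Rightarrow> nat \<Rightarrow> (nat \<Rightarrow> nat) \<Rightarrow> ((nat \<times> nat) \<times> (nat \<times> nat)) set" where
  "lexsum_rel r0 m0 m = {((i, j), (i', j')).
     (i, j) \<in> lexsum_carrier m0 m \<and> (i', j') \<in> lexsum_carrier m0 m \<and>
     ((i \<noteq> i' \<and> (i, i') \<in> r0) \<or> (i = i' \<and> j \<le> j'))}"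

definition L_plus :: "(nat \<times> nat) set \<Rightarrow> nat \<Rightarrow> (nat \<Rightarrow> nat) \<Rightarrow> nat" where
  "L_plus r0 m0 m = card {T. linear_order_on (lexsum_carrier m0 m) T \<and> lexsum_rel r0 m0 m \<subseteq> T}"

definition mpoly_eval :: "((nat \<Rightarrow>\<^sub>0 nat) \<Rightarrow>\<^sub>0 rat) \<Rightarrow> (nat \<Rightarrow> rat) \<Rightarrow> rat" where
  "mpoly_eval p v = (\<Sum>a\<in>Poly_Mapping.keys p. Poly_Mapping.lookup p a * (\<Prod>i\<in>Poly_Mapping.keys a. v i ^ Poly_Mapping.lookup a i))"

definition total_degree :: "((nat \<Rightarrow>\<^sub>0 nat) \<Rightarrow>\<^sub>0 rat) \<Rightarrow> nat" where
  "total_degree p = Max (insert 0 ((\<lambda>a. \<Sum>i\<in>Poly_Mapping.keys a. Poly_Mapping.lookup a i) ` Poly_Mapping.keys p))"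

end

theory Submission
  imports Defs "HOL-Library.FuncSet" "HOL-Library.Infinite_Set" "HOL-Library.Product_Lexorder"
begin

text \<open>Since \<open>f\<close> agrees with \<open>L_plus\<close> at all lattice points, it suffices to show that the number
  of linear extensions grows like \<open>N ^ D\<close> in the lengths \<open>N\<close> of the chains indexed by \<open>S\<close>,
  where \<open>D\<close> is the number of elements of the chains \<open>C_i\<close> with \<open>x_i\<close> incomparable with
  some element of \<open>S\<close> (the free elements).

  Upper bound: the chains indexed by \<open>S\<close> form a single chain of the lexicographic sum, and every
  other non-free element is comparable with all of it. Hence a linear extension is determined by
  its restriction to the chains outside \<open>S\<close> together with, for each free element, the number of
  elements of that single chain below it: at most \<open>(1 + \<Sum>s\<in>S. m_s) ^ D\<close> choices.

  Lower bound: if all chains indexed by \<open>S\<close> have length proportional to \<open>u\<close>, each free element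
  can be slotted independently into one of \<open>u\<close> positions inside the chain of the first element of
  \<open>S\<close> not below it, giving \<open>u ^ D\<close> linear extensions.

  Finally, a polynomial bounded by \<open>K (1 + \<Sum>s\<in>S. v_s) ^ D\<close> has total degree at most \<open>D\<close>
  (a Kronecker substitution isolates a monomial of top degree), and one whose value on the diagonal
  dominates \<open>u ^ D\<close> has total degree at least \<open>D\<close>.\<close>

definition monomial_degree :: "(nat \<Rightarrow>\<^sub>0 nat) \<Rightarrow> nat" where
  "monomial_degree a = (\<Sum>i\<in>Poly_Mapping.keys a. Poly_Mapping.lookup a i)"

lemma monomial_degree_le_total_degree:
  "a \<in> Poly_Mapping.keys f \<Longrightarrow> monomial_degree a \<le> total_degree f"
  unfolding total_degree_def monomial_degree_def by (intro Max_ge) auto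

lemma total_degree_attained:
  assumes "total_degree f > 0"
  obtains a where "a \<in> Poly_Mapping.keys f" "monomial_degree a = total_degree f"
proof -
  have "total_degree f \<in> insert 0 (monomial_degree ` Poly_Mapping.keys f)"
    unfolding total_degree_def monomial_degree_def by (intro Max_in) auto
  with assms that show ?thesis by auto
qed

lemma lookup_le_monomial_degree: "Poly_Mapping.lookup a i \<le> monomial_degree a"
  unfolding monomial_degree_def
  by (cases "i \<in> Poly_Mapping.keys a") (auto intro: member_le_sum simp: in_keys_iff)

lemma lookup_less_Suc_sum_monomial_degree:
  assumes "a \<in> Poly_Mapping.keys f"
  shows "Poly_Mapping.lookup a i < Suc (\<Sum>a\<in>Poly_Mapping.keys f. monomial_degree a)"
proof -
  have "monomial_degree a \<le> (\<Sum>a\<in>Poly_Mapping.keys f. monomial_degree a)"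
    using assms by (intro member_le_sum) auto
  then show ?thesis
    using lookup_le_monomial_degree[of a i] by simp
qed

lemma abs_mpoly_eval_le:
  fixes v :: "nat \<Rightarrow> nat"
  assumes "finite S" and "\<forall>a\<in>Poly_Mapping.keys f. Poly_Mapping.keys a \<subseteq> S"
  shows "\<bar>mpoly_eval f (\<lambda>i. of_nat (v i))\<bar> \<le>
     (\<Sum>a\<in>Poly_Mapping.keys f. \<bar>Poly_Mapping.lookup f a\<bar>) * (1 + of_nat (\<Sum>s\<in>S. v s)) ^ total_degree f"
proof -
  let ?V = "1 + of_nat (\<Sum>s\<in>S. v s) :: rat"
  let ?mono = "\<lambda>a. \<Prod>i\<in>Poly_Mapping.keys a. (of_nat (v i) :: rat) ^ Poly_Mapping.lookup a i"
  have mono_le: "?mono a \<le> ?V ^ total_degree f" if a: "a \<in> Poly_Mapping.keys f" for a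
  proof -
    have "?mono a \<le> (\<Prod>i\<in>Poly_Mapping.keys a. ?V ^ Poly_Mapping.lookup a i)"
    proof (intro prod_mono conjI)
      fix i assume "i \<in> Poly_Mapping.keys a"
      then have "v i \<le> (\<Sum>s\<in>S. v s)"
        using assms a by (intro member_le_sum) auto
      then have "(of_nat (v i) :: rat) \<le> ?V"
        by linarith
      then show "(of_nat (v i) :: rat) ^ Poly_Mapping.lookup a i \<le> ?V ^ Poly_Mapping.lookup a i"
        by (intro power_mono) auto
    qed auto
    also have "\<dots> = ?V ^ monomial_degree a"
      unfolding monomial_degree_def by (simp add: power_sum)
    also have "\<dots> \<le> ?V ^ total_degree f"
      using monomial_degree_le_total_degree[OF a] by (intro power_increasing) (auto simp: sum_nonneg)
    finally show ?thesis .
  qed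
  have "\<bar>mpoly_eval f (\<lambda>i. of_nat (v i))\<bar> \<le>
      (\<Sum>a\<in>Poly_Mapping.keys f. \<bar>Poly_Mapping.lookup f a\<bar> * \<bar>?mono a\<bar>)"
    unfolding mpoly_eval_def by (rule order_trans[OF sum_abs]) (simp add: abs_mult)
  also have "\<dots> \<le> (\<Sum>a\<in>Poly_Mapping.keys f. \<bar>Poly_Mapping.lookup f a\<bar> * ?V ^ total_degree f)"
    using mono_le by (intro sum_mono mult_left_mono) (auto simp: prod_nonneg)
  finally show ?thesis
    by (simp add: sum_distrib_right)
qed

lemma exponent_le_of_power_bound:
  fixes C :: rat
  assumes "\<forall>t::nat. t \<ge> 1 \<longrightarrow> of_nat t ^ D \<le> C * of_nat t ^ d"
  shows "D \<le> d"
proof (rule ccontr)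
  assume "\<not> D \<le> d"
  obtain n :: nat where n: "C < of_nat n"
    using reals_Archimedean2 by blast
  define t where "t = Suc n"
  have "of_nat t * (of_nat t :: rat) ^ d = of_nat t ^ Suc d"
    by simp
  also have "\<dots> \<le> of_nat t ^ D"
    using \<open>\<not> D \<le> d\<close> by (intro power_increasing) (auto simp: t_def)
  also have "\<dots> \<le> C * of_nat t ^ d"
    using assms by (auto simp: t_def)
  finally have "of_nat t \<le> C"
    by (simp add: t_def)
  with n show False
    by (simp add: t_def)
qed

lemma total_degree_ge_of_growth:
  assumes "finite S" and "\<forall>a\<in>Poly_Mapping.keys f. Poly_Mapping.keys a \<subseteq> S"
    and growth: "\<forall>t::nat. of_nat (t ^ D) \<le> mpoly_eval f (\<lambda>i. of_nat (c * t))"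
  shows "D \<le> total_degree f"
proof -
  define A where "A = (\<Sum>a\<in>Poly_Mapping.keys f. \<bar>Poly_Mapping.lookup f a\<bar>)"
  define C where "C = A * (1 + of_nat (card S * c)) ^ total_degree f"
  show ?thesis
  proof (rule exponent_le_of_power_bound[where C = C], intro allI impI)
    fix t :: nat assume "t \<ge> 1"
    have "A \<ge> 0"
      by (simp add: A_def sum_nonneg)
    have "(1 + of_nat (\<Sum>s\<in>S. c * t) :: rat) \<le> (1 + of_nat (card S * c)) * of_nat t"
      using \<open>t \<ge> 1\<close> by (simp add: algebra_simps)
    then have "(1 + of_nat (\<Sum>s\<in>S. c * t)) ^ total_degree f
        \<le> ((1 + of_nat (card S * c)) * of_nat t :: rat) ^ total_degree f"
      by (intro power_mono) auto
    then have "A * (1 + of_nat (\<Sum>s\<in>S. c * t)) ^ total_degree f \<le> C * of_nat t ^ total_degree f"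
      using \<open>A \<ge> 0\<close> by (simp add: C_def power_mult_distrib mult_left_mono mult.assoc)
    moreover have "of_nat (t ^ D) \<le> A * (1 + of_nat (\<Sum>s\<in>S. c * t) :: rat) ^ total_degree f"
      using growth abs_mpoly_eval_le[OF assms(1,2), of "\<lambda>_. c * t"]
      unfolding A_def by (meson abs_ge_self order_trans)
    ultimately show "(of_nat t :: rat) ^ D \<le> C * of_nat t ^ total_degree f"
      by simp
  qed
qed

definition weight :: "(nat \<Rightarrow> nat) \<Rightarrow> (nat \<Rightarrow>\<^sub>0 nat) \<Rightarrow> nat" where
  "weight w a = (\<Sum>i\<in>Poly_Mapping.keys a. Poly_Mapping.lookup a i * w i)"

lemma mpoly_eval_power_weight:
  "mpoly_eval f (\<lambda>i. x ^ w i) = (\<Sum>a\<in>Poly_Mapping.keys f. Poly_Mapping.lookup f a * x ^ weight w a)"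
  unfolding mpoly_eval_def weight_def
  by (simp add: power_sum power_mult[symmetric] mult.commute)

lemma slot_less: "(a::nat) < b \<Longrightarrow> x < u \<Longrightarrow> a * u + x < b * u + y"
proof -
  assume "a < b" "x < u"
  then have "a * u + x < Suc a * u"
    by simp
  also have "\<dots> \<le> b * u"
    using \<open>a < b\<close> by (intro mult_le_mono1) simp
  finally show ?thesis
    by simp
qed

lemma digit_sum_less:
  fixes a :: "nat \<Rightarrow> nat"
  assumes "\<forall>i<n. a i < B"
  shows "(\<Sum>i<n. a i * B ^ i) < B ^ n"
  using assms
proof (induction n)
  case (Suc n)
  then have "(\<Sum>i<Suc n. a i * B ^ i) < B ^ n + a n * B ^ n"
    by simp
  also have "\<dots> \<le> B * B ^ n"
  proof -
    have "Suc (a n) \<le> B"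
      using Suc.prems(1)[rule_format, OF lessI] by simp
    then have "Suc (a n) * B ^ n \<le> B * B ^ n"
      by (rule mult_le_mono1)
    then show ?thesis
      by simp
  qed
  finally show ?case
    by simp
qed simp

lemma digit_sum_inj:
  fixes a b :: "nat \<Rightarrow> nat"
  assumes "\<forall>i<n. a i < B" and "\<forall>i<n. b i < B"
    and "(\<Sum>i<n. a i * B ^ i) = (\<Sum>i<n. b i * B ^ i)"
  shows "\<forall>i<n. a i = b i"
  using assms
proof (induction n)
  case (Suc n)
  let ?a = "\<Sum>i<n. a i * B ^ i" and ?b = "\<Sum>i<n. b i * B ^ i"
  have less: "?a < B ^ n" "?b < B ^ n"
    using Suc.prems by (auto intro: digit_sum_less)
  have eq: "?a + a n * B ^ n = ?b + b n * B ^ n"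
    using Suc.prems(3) by simp
  then have "(?a + a n * B ^ n) div B ^ n = (?b + b n * B ^ n) div B ^ n"
    "(?a + a n * B ^ n) mod B ^ n = (?b + b n * B ^ n) mod B ^ n"
    by simp_all
  moreover have "B ^ n \<noteq> 0"
    using less(1) by (rule gr_implies_not0)
  ultimately have "a n = b n" "?a = ?b"
    using less by simp_all
  with Suc show ?case
    by (auto simp: less_Suc_eq)
qed simp

text \<open>With weights \<open>M + B ^ i\<close> and \<open>M\<close> large, the weight of a monomial records its degree in
  the high part and its exponents, as base-\<open>B\<close> digits, in the low part.\<close>

lemma weight_split:
  assumes "Poly_Mapping.keys a \<subseteq> {..<n}"
  shows "weight (\<lambda>i. M + B ^ i) a = M * monomial_degree a + (\<Sum>i<n. Poly_Mapping.lookup a i * B ^ i)"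
proof -
  have "weight (\<lambda>i. M + B ^ i) a =
      M * monomial_degree a + (\<Sum>i\<in>Poly_Mapping.keys a. Poly_Mapping.lookup a i * B ^ i)"
    unfolding weight_def monomial_degree_def
    by (simp add: algebra_simps sum.distrib sum_distrib_left)
  also have "(\<Sum>i\<in>Poly_Mapping.keys a. Poly_Mapping.lookup a i * B ^ i) =
      (\<Sum>i<n. Poly_Mapping.lookup a i * B ^ i)"
    using assms by (intro sum.mono_neutral_left) (auto simp: in_keys_iff)
  finally show ?thesis .
qed

lemma inj_on_weight:
  assumes keys: "\<forall>a\<in>K. Poly_Mapping.keys a \<subseteq> {..<n}"
    and digits: "\<forall>a\<in>K. \<forall>i. Poly_Mapping.lookup a i < B"
    and "B ^ n \<le> M"
  shows "inj_on (weight (\<lambda>i. M + B ^ i)) K"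
proof (rule inj_onI)
  fix a b assume a: "a \<in> K" and b: "b \<in> K"
    and eq: "weight (\<lambda>i. M + B ^ i) a = weight (\<lambda>i. M + B ^ i) b"
  let ?low = "\<lambda>a. \<Sum>i<n. Poly_Mapping.lookup a i * B ^ i"
  have low_less: "?low a < M" "?low b < M"
    using digits a b \<open>B ^ n \<le> M\<close> digit_sum_less[of n _ B] by (meson order_less_le_trans)+
  have "M * monomial_degree a + ?low a = M * monomial_degree b + ?low b"
    using eq weight_split keys a b by metis
  then have "(M * monomial_degree a + ?low a) mod M = (M * monomial_degree b + ?low b) mod M"
    by simp
  then have "?low a = ?low b"
    using low_less by simp
  then have "\<forall>i<n. Poly_Mapping.lookup a i = Poly_Mapping.lookup b i"
    using digits a b by (intro digit_sum_inj[of n _ B]) auto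
  moreover have "Poly_Mapping.lookup a i = 0" "Poly_Mapping.lookup b i = 0" if "i \<ge> n" for i
    using keys a b that by (metis lessThan_iff not_in_keys_iff_lookup_eq_zero not_le subsetD)+
  ultimately show "a = b"
    by (intro poly_mapping_eqI) (metis not_less)
qed

lemma inj_on_strict_max:
  fixes g :: "'a \<Rightarrow> 'b::linorder"
  assumes "finite A" and "A \<noteq> {}" and "inj_on g A"
  obtains a0 where "a0 \<in> A" and "\<forall>a\<in>A - {a0}. g a < g a0"
proof -
  have "Max (g ` A) \<in> g ` A"
    using assms(1,2) by (intro Max_in) auto
  then obtain a0 where a0: "a0 \<in> A" "g a0 = Max (g ` A)"
    by auto
  have "g a < g a0" if "a \<in> A - {a0}" for a
  proof -
    have "g a \<le> g a0"
      using that assms(1) by (simp add: a0(2))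
    moreover have "g a \<noteq> g a0"
      using that a0(1) assms(3) by (auto dest: inj_onD)
    ultimately show ?thesis
      by simp
  qed
  with a0(1) that show ?thesis
    by blast
qed

lemma abs_sum_powers_le:
  fixes c :: "'a \<Rightarrow> rat"
  assumes "x \<ge> 1" and "\<forall>a\<in>A. e a \<le> E"
  shows "\<bar>\<Sum>a\<in>A. c a * x ^ e a\<bar> \<le> (\<Sum>a\<in>A. \<bar>c a\<bar>) * x ^ E"
proof -
  have "\<bar>\<Sum>a\<in>A. c a * x ^ e a\<bar> \<le> (\<Sum>a\<in>A. \<bar>c a\<bar> * x ^ E)"
    using assms by (intro order_trans[OF sum_abs] sum_mono)
      (auto simp: abs_mult intro!: mult_left_mono power_increasing)
  then show ?thesis
    by (simp add: sum_distrib_right)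
qed

lemma dominant_exponent_le:
  fixes c :: "'a \<Rightarrow> rat" and e :: "'a \<Rightarrow> nat"
  assumes "finite A" and "a0 \<in> A" and "c a0 \<noteq> 0" and "\<forall>a\<in>A - {a0}. e a < e a0"
    and bound: "\<forall>t::nat. t \<ge> 1 \<longrightarrow> \<bar>\<Sum>a\<in>A. c a * of_nat t ^ e a\<bar> \<le> K * of_nat t ^ E"
  shows "e a0 \<le> E"
proof (rule ccontr)
  assume "\<not> e a0 \<le> E"
  define R where "R = (\<Sum>a\<in>A - {a0}. \<bar>c a\<bar>)"
  have growth: "of_nat t ^ e a0 \<le> ((K + R) / \<bar>c a0\<bar>) * of_nat t ^ (e a0 - 1)" if "t \<ge> 1" for t :: nat
  proof -
    let ?T = "of_nat t :: rat"
    have "\<forall>a\<in>A - {a0}. e a \<le> e a0 - 1"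
    proof
      fix a assume "a \<in> A - {a0}"
      with assms(4) have "e a < e a0"
        by blast
      then show "e a \<le> e a0 - 1"
        by arith
    qed
    then have rest: "\<bar>\<Sum>a\<in>A - {a0}. c a * ?T ^ e a\<bar> \<le> R * ?T ^ (e a0 - 1)"
      unfolding R_def using \<open>t \<ge> 1\<close> by (intro abs_sum_powers_le) simp_all
    have "?T ^ E \<le> ?T ^ (e a0 - 1)"
      using \<open>t \<ge> 1\<close> \<open>\<not> e a0 \<le> E\<close> by (intro power_increasing) auto
    moreover have "K \<ge> 0"
      using bound[rule_format, of 1] abs_ge_zero order_trans by fastforce
    ultimately have main: "K * ?T ^ E \<le> K * ?T ^ (e a0 - 1)"
      by (rule mult_left_mono)
    have "\<bar>c a0\<bar> * ?T ^ e a0 =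
        \<bar>(\<Sum>a\<in>A. c a * ?T ^ e a) - (\<Sum>a\<in>A - {a0}. c a * ?T ^ e a)\<bar>"
      using assms(1,2) by (simp add: sum.remove abs_mult)
    also have "\<dots> \<le> \<bar>\<Sum>a\<in>A. c a * ?T ^ e a\<bar> + \<bar>\<Sum>a\<in>A - {a0}. c a * ?T ^ e a\<bar>"
      by (rule abs_triangle_ineq4)
    also have "\<dots> \<le> K * ?T ^ E + R * ?T ^ (e a0 - 1)"
      using bound \<open>t \<ge> 1\<close> rest by (intro add_mono) auto
    also have "\<dots> \<le> (K + R) * ?T ^ (e a0 - 1)"
      using main by (simp add: algebra_simps)
    finally show ?thesis
      using assms(3) by (simp add: field_simps)
  qed
  have "e a0 \<le> e a0 - 1"
    using growth by (intro exponent_le_of_power_bound[where C = "(K + R) / \<bar>c a0\<bar>"]) blast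
  with \<open>\<not> e a0 \<le> E\<close> show False
    by simp
qed

lemma abs_mpoly_eval_powers_le:
  fixes f :: "(nat \<Rightarrow>\<^sub>0 nat) \<Rightarrow>\<^sub>0 rat"
  assumes bound: "\<forall>v::nat \<Rightarrow> nat. \<bar>mpoly_eval f (\<lambda>i. of_nat (v i))\<bar> \<le> K * (1 + of_nat (\<Sum>s\<in>S. v s)) ^ D"
    and "\<forall>s\<in>S. w s \<le> W" and "t \<ge> 1"
  shows "\<bar>mpoly_eval f (\<lambda>i. of_nat t ^ w i)\<bar> \<le> K * (1 + of_nat (card S)) ^ D * of_nat t ^ (W * D)"
proof -
  have "K \<ge> 0"
    using bound[rule_format, of "\<lambda>_. 0"] abs_ge_zero order_trans by fastforce
  have "(\<Sum>s\<in>S. t ^ w s) \<le> card S * t ^ W"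
    using sum_bounded_above[of S "\<lambda>s. t ^ w s" "t ^ W"] assms(2,3) by (simp add: power_increasing)
  then have "(of_nat (\<Sum>s\<in>S. t ^ w s) :: rat) \<le> of_nat (card S * t ^ W)"
    by (simp only: of_nat_le_iff)
  moreover have "(1 :: rat) \<le> of_nat t ^ W"
    using \<open>t \<ge> 1\<close> by simp
  ultimately have "1 + of_nat (\<Sum>s\<in>S. t ^ w s) \<le> (1 + of_nat (card S)) * (of_nat t ^ W :: rat)"
    by (simp add: algebra_simps)
  then have le: "K * (1 + of_nat (\<Sum>s\<in>S. t ^ w s)) ^ D \<le> K * ((1 + of_nat (card S)) * of_nat t ^ W) ^ D"
    using \<open>K \<ge> 0\<close> by (intro mult_left_mono power_mono) (auto simp: sum_nonneg)
  have "\<bar>mpoly_eval f (\<lambda>i. of_nat t ^ w i)\<bar> \<le> K * (1 + of_nat (\<Sum>s\<in>S. t ^ w s)) ^ D"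
    using bound[rule_format, of "\<lambda>i. t ^ w i"] by simp
  also note le
  also have "K * ((1 + of_nat (card S)) * of_nat t ^ W) ^ D = K * (1 + of_nat (card S)) ^ D * of_nat t ^ (W * D)"
    by (simp add: power_mult_distrib power_mult)
  finally show ?thesis .
qed

text \<open>Substituting \<open>t ^ (M + B ^ i)\<close> for the \<open>i\<close>-th variable turns \<open>f\<close> into a sum of powers
  of \<open>t\<close> whose largest exponent is attained by a unique monomial and is at least \<open>M\<close> times
  the total degree, while the growth hypothesis bounds it by about \<open>M\<close> times \<open>D\<close>.\<close>

lemma total_degree_le_of_growth:
  fixes f :: "(nat \<Rightarrow>\<^sub>0 nat) \<Rightarrow>\<^sub>0 rat"
  assumes "finite S" and keys: "\<forall>a\<in>Poly_Mapping.keys f. Poly_Mapping.keys a \<subseteq> S"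
    and bound: "\<forall>v::nat \<Rightarrow> nat. \<bar>mpoly_eval f (\<lambda>i. of_nat (v i))\<bar> \<le> K * (1 + of_nat (\<Sum>s\<in>S. v s)) ^ D"
  shows "total_degree f \<le> D"
proof (rule ccontr)
  assume "\<not> total_degree f \<le> D"
  obtain n where "S \<subseteq> {..<n}"
    using \<open>finite S\<close> finite_nat_bounded by blast
  define B where "B = Suc (\<Sum>a\<in>Poly_Mapping.keys f. monomial_degree a)"
  define M where "M = (D + 1) * B ^ n"
  define w where "w = (\<lambda>i. M + B ^ i)"
  have inj: "inj_on (weight w) (Poly_Mapping.keys f)"
    unfolding w_def using keys \<open>S \<subseteq> {..<n}\<close> lookup_less_Suc_sum_monomial_degree
    by (intro inj_on_weight[where n = n]) (auto simp: M_def B_def)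
  have "total_degree f > 0"
    using \<open>\<not> total_degree f \<le> D\<close> by simp
  then obtain a1 where a1: "a1 \<in> Poly_Mapping.keys f" "monomial_degree a1 = total_degree f"
    by (rule total_degree_attained)
  then obtain a0 where a0: "a0 \<in> Poly_Mapping.keys f"
    and a0_max: "\<forall>a\<in>Poly_Mapping.keys f - {a0}. weight w a < weight w a0"
    using inj_on_strict_max[OF finite_keys _ inj] by blast
  have "M * total_degree f \<le> weight w a0"
  proof -
    have "M * total_degree f \<le> weight w a1"
      using weight_split[of a1 n M B] keys a1 \<open>S \<subseteq> {..<n}\<close> by (auto simp: w_def)
    also have "\<dots> \<le> weight w a0"
      using a0_max[rule_format, of a1] a1(1) by (cases "a1 = a0") auto
    finally show ?thesis .
  qed
  moreover have "weight w a0 \<le> (M + B ^ n) * D"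
  proof (rule dominant_exponent_le[OF finite_keys a0 _ a0_max])
    show "Poly_Mapping.lookup f a0 \<noteq> 0"
      using a0 by (simp add: in_keys_iff)
    have "\<forall>s\<in>S. w s \<le> M + B ^ n"
    proof
      fix s assume "s \<in> S"
      then have "B ^ s \<le> B ^ n"
        using \<open>S \<subseteq> {..<n}\<close> by (intro power_increasing) (auto simp: B_def)
      then show "w s \<le> M + B ^ n"
        by (simp add: w_def)
    qed
    then show "\<forall>t::nat. t \<ge> 1 \<longrightarrow> \<bar>\<Sum>a\<in>Poly_Mapping.keys f. Poly_Mapping.lookup f a * of_nat t ^ weight w a\<bar>
        \<le> (K * (1 + of_nat (card S)) ^ D) * of_nat t ^ ((M + B ^ n) * D)"
      using abs_mpoly_eval_powers_le[OF bound] by (simp add: mpoly_eval_power_weight)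
  qed
  moreover have "(M + B ^ n) * D < M * total_degree f"
  proof -
    have "(M + B ^ n) * D < M * (D + 1)"
      using zero_less_power[of B n] by (simp add: M_def B_def algebra_simps)
    also have "\<dots> \<le> M * total_degree f"
      using \<open>\<not> total_degree f \<le> D\<close> by (intro mult_le_mono2) simp
    finally show ?thesis .
  qed
  ultimately show False
    by linarith
qed

lemma linear_extension_on_chain:
  assumes "linear_order_on A T" and "R \<subseteq> T" and "C \<subseteq> A"
    and chain: "\<forall>p\<in>C. \<forall>q\<in>C. (p, q) \<in> R \<or> (q, p) \<in> R"
  shows "T \<inter> (C \<times> C) = R \<inter> (C \<times> C)"
proof -
  have "antisym T"
    using assms(1) by (simp add: linear_order_on_def partial_order_on_def)
  have "(p, q) \<in> R" if "(p, q) \<in> T" "p \<in> C" "q \<in> C" for p q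
  proof (rule ccontr)
    assume "(p, q) \<notin> R"
    then have "(q, p) \<in> R"
      using chain that by blast
    then have "p = q"
      using \<open>antisym T\<close> \<open>R \<subseteq> T\<close> that(1) by (auto dest: antisymD)
    with \<open>(p, q) \<notin> R\<close> \<open>(q, p) \<in> R\<close> show False
      by simp
  qed
  then show ?thesis
    using \<open>R \<subseteq> T\<close> by auto
qed

lemma downsets_in_chain_nested:
  assumes "trans T1" and "trans T2" and "R \<subseteq> T1" and "R \<subseteq> T2"
    and chain: "\<forall>x\<in>C. \<forall>y\<in>C. (x, y) \<in> R \<or> (y, x) \<in> R"
  shows "{q \<in> C. (q, p) \<in> T1} \<subseteq> {q \<in> C. (q, p) \<in> T2} \<or> {q \<in> C. (q, p) \<in> T2} \<subseteq> {q \<in> C. (q, p) \<in> T1}"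
proof (rule ccontr)
  assume "\<not> ?thesis"
  then obtain x y where x: "x \<in> C" "(x, p) \<in> T1" "(x, p) \<notin> T2" and y: "y \<in> C" "(y, p) \<in> T2" "(y, p) \<notin> T1"
    by blast
  from chain x(1) y(1) consider "(x, y) \<in> R" | "(y, x) \<in> R"
    by blast
  then show False
  proof cases
    case 1
    with assms(2,4) x y show False
      by (meson subsetD transD)
  next
    case 2
    with assms(1,3) x y show False
      by (meson subsetD transD)
  qed
qed

lemma linear_orders_subsetI:
  assumes lin: "linear_order_on A T" "linear_order_on A T'" and "A = F \<union> C"
    and on_F: "T \<inter> (F \<times> F) = T' \<inter> (F \<times> F)" and on_C: "T \<inter> (C \<times> C) = T' \<inter> (C \<times> C)"
    and downsets: "\<forall>p\<in>F. {q \<in> C. (q, p) \<in> T} = {q \<in> C. (q, p) \<in> T'}"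
  shows "T \<subseteq> T'"
proof safe
  fix p q assume pq: "(p, q) \<in> T"
  have "T \<subseteq> A \<times> A" and "antisym T" and "total_on A T'" and "refl_on A T'"
    using lin by (auto simp: linear_order_on_def partial_order_on_def preorder_on_def refl_on_def)
  then have "p \<in> A" "q \<in> A"
    using pq by auto
  then consider "p \<in> F" "q \<in> F" | "p \<in> C" "q \<in> C" | "p \<in> C" "q \<in> F" | "p \<in> F" "q \<in> C"
    using \<open>A = F \<union> C\<close> by blast
  then show "(p, q) \<in> T'"
  proof cases
    case 1
    then show ?thesis
      using on_F pq by blast
  next
    case 2
    then show ?thesis
      using on_C pq by blast
  next
    case 3
    then show ?thesis
      using downsets pq by blast
  next
    case 4
    show ?thesis
    proof (cases "p = q")
      case True
      then show ?thesis
        using \<open>refl_on A T'\<close> \<open>p \<in> A\<close> by (simp add: refl_on_def)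
    next
      case False
      then have "(q, p) \<notin> T"
        using \<open>antisym T\<close> pq by (auto dest: antisymD)
      then have "(q, p) \<notin> T'"
        using downsets 4 by blast
      then show ?thesis
        using \<open>total_on A T'\<close> \<open>p \<in> A\<close> \<open>q \<in> A\<close> False by (auto simp: total_on_def)
    qed
  qed
qed

lemma linear_orders_eqI:
  assumes lin: "linear_order_on A T1" "linear_order_on A T2" and A: "A = F \<union> C"
    and on_F: "T1 \<inter> (F \<times> F) = T2 \<inter> (F \<times> F)" and on_C: "T1 \<inter> (C \<times> C) = T2 \<inter> (C \<times> C)"
    and downsets: "\<forall>p\<in>F. {q \<in> C. (q, p) \<in> T1} = {q \<in> C. (q, p) \<in> T2}"
  shows "T1 = T2"
proof
  show "T1 \<subseteq> T2"
    by (rule linear_orders_subsetI[OF lin A on_F on_C downsets])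
  show "T2 \<subseteq> T1"
    using downsets by (intro linear_orders_subsetI[OF lin(2,1) A on_F[symmetric] on_C[symmetric]]) simp
qed

lemma linear_extension_of_injective_key:
  fixes key :: "'a \<Rightarrow> 'b::linorder"
  assumes "inj_on key A" and "R \<subseteq> A \<times> A" and mono: "\<forall>(p, q)\<in>R. p \<noteq> q \<longrightarrow> key p < key q"
  shows "linear_order_on A {(p, q). p \<in> A \<and> q \<in> A \<and> key p \<le> key q}"
    and "R \<subseteq> {(p, q). p \<in> A \<and> q \<in> A \<and> key p \<le> key q}"
proof -
  show "linear_order_on A {(p, q). p \<in> A \<and> q \<in> A \<and> key p \<le> key q}"
    using \<open>inj_on key A\<close>
    unfolding linear_order_on_def partial_order_on_def preorder_on_def refl_on_def trans_def
      antisym_def total_on_def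
    by (auto dest: inj_onD)
  show "R \<subseteq> {(p, q). p \<in> A \<and> q \<in> A \<and> key p \<le> key q}"
    using assms(2) mono by fastforce
qed

locale lexsum_chain =
  fixes r0 :: "(nat \<times> nat) set" and m0 :: nat and S :: "nat set" and mfix :: "nat \<Rightarrow> nat"
  assumes poset: "partial_order_on {..<m0} r0"
    and S_sub: "S \<subseteq> {..<m0}"
    and S_chain: "\<forall>a\<in>S. \<forall>b\<in>S. (a, b) \<in> r0 \<or> (b, a) \<in> r0"
begin

definition sizes :: "(nat \<Rightarrow> nat) \<Rightarrow> nat \<Rightarrow> nat" where
  "sizes v i = (if i \<in> S then v i else mfix i)"

abbreviation elems :: "(nat \<Rightarrow> nat) \<Rightarrow> (nat \<times> nat) set" where
  "elems v \<equiv> lexsum_carrier m0 (sizes v)"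

abbreviation rel :: "(nat \<Rightarrow> nat) \<Rightarrow> (nat \<times> nat) rel" where
  "rel v \<equiv> lexsum_rel r0 m0 (sizes v)"

definition lin_exts :: "(nat \<Rightarrow> nat) \<Rightarrow> (nat \<times> nat) rel set" where
  "lin_exts v = {T. linear_order_on (elems v) T \<and> rel v \<subseteq> T}"

text \<open>The element \<open>(i, j)\<close> is \<open>x_{i,j}\<close>, with 0-based indices.\<close>

definition incomp :: "nat set" where
  "incomp = {i. i < m0 \<and> (\<exists>s\<in>S. (i, s) \<notin> r0 \<and> (s, i) \<notin> r0)}"

definition fixed_part :: "(nat \<times> nat) set" where
  "fixed_part = {(i, j). i < m0 \<and> i \<notin> S \<and> j < mfix i}"

definition free_part :: "(nat \<times> nat) set" where
  "free_part = {(i, j). i \<in> incomp \<and> j < mfix i}"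

definition chain_part :: "(nat \<Rightarrow> nat) \<Rightarrow> (nat \<times> nat) set" where
  "chain_part v = {(i, j). i \<in> S \<and> j < v i}"

lemma r0_refl: "i < m0 \<Longrightarrow> (i, i) \<in> r0"
  using poset by (auto simp: partial_order_on_def preorder_on_def refl_on_def)

lemma r0_trans: "(a, b) \<in> r0 \<Longrightarrow> (b, c) \<in> r0 \<Longrightarrow> (a, c) \<in> r0"
  using poset by (auto simp: partial_order_on_def preorder_on_def dest: transD)

lemma r0_antisym: "(a, b) \<in> r0 \<Longrightarrow> (b, a) \<in> r0 \<Longrightarrow> a = b"
  using poset by (auto simp: partial_order_on_def dest: antisymD)

lemma r0_field: "(a, b) \<in> r0 \<Longrightarrow> a < m0 \<and> b < m0"
  using poset by (auto simp: partial_order_on_def preorder_on_def refl_on_def)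

lemma finite_S: "finite S"
  using S_sub finite_subset by blast

lemma incomp_disjoint_S: "i \<in> incomp \<Longrightarrow> i \<notin> S"
  unfolding incomp_def using S_chain by blast

lemma elems_eq: "elems v = fixed_part \<union> chain_part v"
  using S_sub by (auto simp: lexsum_carrier_def fixed_part_def chain_part_def sizes_def split: if_split_asm)

lemma rel_refl: "p \<in> elems v \<Longrightarrow> (p, p) \<in> rel v"
  by (auto simp: lexsum_rel_def)

lemma free_part_subset: "free_part \<subseteq> fixed_part"
  using incomp_disjoint_S by (auto simp: free_part_def fixed_part_def incomp_def)

lemma finite_fixed_part: "finite fixed_part"
  by (rule finite_subset[of _ "SIGMA i:{..<m0}. {..<mfix i}"]) (auto simp: fixed_part_def)

lemma card_chain_part: "card (chain_part v) = (\<Sum>s\<in>S. v s)"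
  and finite_chain_part: "finite (chain_part v)"
proof -
  have "chain_part v = (SIGMA s:S. {..<v s})"
    by (auto simp: chain_part_def)
  then show "card (chain_part v) = (\<Sum>s\<in>S. v s)" "finite (chain_part v)"
    using finite_S by (simp_all add: card_SigmaI)
qed

lemma card_free_part: "card free_part = (\<Sum>i\<in>incomp. mfix i)"
  and finite_free_part: "finite free_part"
proof -
  have "free_part = (SIGMA i:incomp. {..<mfix i})"
    by (auto simp: free_part_def)
  moreover have "finite incomp"
    by (simp add: incomp_def)
  ultimately show "card free_part = (\<Sum>i\<in>incomp. mfix i)" "finite free_part"
    by (simp_all add: card_SigmaI)
qed

lemma finite_lin_exts: "finite (lin_exts v)"
proof (rule finite_subset)
  show "lin_exts v \<subseteq> Pow (elems v \<times> elems v)"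
    by (auto simp: lin_exts_def linear_order_on_def partial_order_on_def preorder_on_def refl_on_def)
  show "finite (Pow (elems v \<times> elems v))"
    using finite_fixed_part finite_chain_part by (simp add: elems_eq)
qed

lemma lin_exts_linear: "T \<in> lin_exts v \<Longrightarrow> linear_order_on (elems v) T"
  and lin_exts_extends: "T \<in> lin_exts v \<Longrightarrow> rel v \<subseteq> T"
  by (simp_all add: lin_exts_def)

lemma lin_exts_trans: "T \<in> lin_exts v \<Longrightarrow> trans T"
  by (simp add: lin_exts_def linear_order_on_def partial_order_on_def preorder_on_def)

lemma comparable_on_chain_part:
  "\<forall>p\<in>chain_part v. \<forall>q\<in>chain_part v. (p, q) \<in> rel v \<or> (q, p) \<in> rel v"
  using S_chain S_sub by (fastforce simp: chain_part_def lexsum_rel_def lexsum_carrier_def sizes_def)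

lemma comparable_if_not_free:
  assumes "p \<in> fixed_part - free_part" and "q \<in> chain_part v"
  shows "(p, q) \<in> rel v \<or> (q, p) \<in> rel v"
  using assms S_sub
  by (cases p, cases q) (fastforce simp: fixed_part_def free_part_def chain_part_def incomp_def
      lexsum_rel_def lexsum_carrier_def sizes_def)

definition downset :: "(nat \<Rightarrow> nat) \<Rightarrow> (nat \<times> nat) rel \<Rightarrow> nat \<times> nat \<Rightarrow> (nat \<times> nat) set" where
  "downset v T p = {q \<in> chain_part v. (q, p) \<in> T}"

lemma lin_exts_on_chain_part:
  "T \<in> lin_exts v \<Longrightarrow> T \<inter> (chain_part v \<times> chain_part v) = rel v \<inter> (chain_part v \<times> chain_part v)"
  using comparable_on_chain_part by (intro linear_extension_on_chain) (auto simp: lin_exts_def elems_eq)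

lemma downset_forced:
  assumes "T \<in> lin_exts v" and "p \<in> fixed_part - free_part"
  shows "downset v T p = downset v (rel v) p"
proof -
  have "T \<inter> ({p, q} \<times> {p, q}) = rel v \<inter> ({p, q} \<times> {p, q})" if "q \<in> chain_part v" for q
    using assms that comparable_if_not_free[of p q v] rel_refl[of p v] rel_refl[of q v]
    by (intro linear_extension_on_chain) (auto simp: lin_exts_def elems_eq)
  then have "(q, p) \<in> T \<longleftrightarrow> (q, p) \<in> rel v" if "q \<in> chain_part v" for q
    using that by blast
  then show ?thesis
    by (auto simp: downset_def)
qed

lemma downset_eq_if_card_eq:
  assumes T1: "T1 \<in> lin_exts v" and T2: "T2 \<in> lin_exts v"
    and card_eq: "card (downset v T1 p) = card (downset v T2 p)"
  shows "downset v T1 p = downset v T2 p"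
proof -
  have fin: "finite (downset v T p)" for T
    using finite_chain_part by (simp add: downset_def)
  have "downset v T1 p \<subseteq> downset v T2 p \<or> downset v T2 p \<subseteq> downset v T1 p"
    unfolding downset_def using T1 T2 comparable_on_chain_part
    by (intro downsets_in_chain_nested[where R = "rel v"]) (auto simp: lin_exts_trans lin_exts_extends)
  then show ?thesis
    using card_subset_eq[OF fin _ card_eq] card_subset_eq[OF fin _ card_eq[symmetric]] by blast
qed

definition lin_ext_code :: "(nat \<Rightarrow> nat) \<Rightarrow> (nat \<times> nat) rel \<Rightarrow> (nat \<times> nat) rel \<times> (nat \<times> nat \<Rightarrow> nat)" where
  "lin_ext_code v T = (T \<inter> (fixed_part \<times> fixed_part), restrict (\<lambda>p. card (downset v T p)) free_part)"

lemma lin_ext_code_inj: "inj_on (lin_ext_code v) (lin_exts v)"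
proof (rule inj_onI)
  fix T1 T2 assume T1: "T1 \<in> lin_exts v" and T2: "T2 \<in> lin_exts v"
    and code: "lin_ext_code v T1 = lin_ext_code v T2"
  have downsets: "\<forall>p\<in>fixed_part. downset v T1 p = downset v T2 p"
  proof
    fix p assume "p \<in> fixed_part"
    show "downset v T1 p = downset v T2 p"
    proof (cases "p \<in> free_part")
      case True
      then have "card (downset v T1 p) = card (downset v T2 p)"
        using fun_cong[OF arg_cong[OF code, of snd], of p] by (simp add: lin_ext_code_def)
      then show ?thesis
        by (rule downset_eq_if_card_eq[OF T1 T2])
    next
      case False
      then show ?thesis
        using downset_forced[OF T1] downset_forced[OF T2] \<open>p \<in> fixed_part\<close> by blast
    qed
  qed
  have on_fixed: "T1 \<inter> (fixed_part \<times> fixed_part) = T2 \<inter> (fixed_part \<times> fixed_part)"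
    using code by (simp add: lin_ext_code_def)
  have "T1 \<inter> (chain_part v \<times> chain_part v) = T2 \<inter> (chain_part v \<times> chain_part v)"
    using lin_exts_on_chain_part[OF T1] lin_exts_on_chain_part[OF T2] by simp
  then show "T1 = T2"
    using downsets unfolding downset_def
    by (rule linear_orders_eqI[OF lin_exts_linear[OF T1] lin_exts_linear[OF T2] elems_eq on_fixed])
qed

lemma card_lin_exts_le:
  "card (lin_exts v) \<le> 2 ^ card (fixed_part \<times> fixed_part) * (1 + (\<Sum>s\<in>S. v s)) ^ (\<Sum>i\<in>incomp. mfix i)"
proof -
  let ?codes = "Pow (fixed_part \<times> fixed_part) \<times> (free_part \<rightarrow>\<^sub>E {..card (chain_part v)})"
  have codes: "lin_ext_code v T \<in> ?codes" for T
  proof -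
    have "card (downset v T p) \<le> card (chain_part v)" for p
      using finite_chain_part by (intro card_mono) (auto simp: downset_def)
    then show ?thesis
      by (simp add: lin_ext_code_def)
  qed
  have "card (lin_exts v) \<le> card ?codes"
  proof (rule card_inj_on_le[OF lin_ext_code_inj])
    show "lin_ext_code v ` lin_exts v \<subseteq> ?codes"
      using codes by blast
    show "finite ?codes"
      using finite_fixed_part finite_free_part by (simp add: finite_PiE)
  qed
  also have "card ?codes = 2 ^ card (fixed_part \<times> fixed_part) * (1 + (\<Sum>s\<in>S. v s)) ^ (\<Sum>i\<in>incomp. mfix i)"
    using finite_fixed_part finite_free_part
    by (simp add: card_cartesian_product card_Pow card_PiE card_chain_part card_free_part)
  finally show ?thesis .
qed

definition chain_below :: "nat \<Rightarrow> nat set" where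
  "chain_below x = {s \<in> S. (s, x) \<in> r0}"

definition chain_rank :: "nat \<Rightarrow> nat" where
  "chain_rank x = card (chain_below x)"

lemma finite_chain_below: "finite (chain_below x)"
  using finite_S by (simp add: chain_below_def)

lemma chain_rank_mono: "(a, b) \<in> r0 \<Longrightarrow> chain_rank a \<le> chain_rank b"
  unfolding chain_rank_def using finite_chain_below
  by (intro card_mono) (auto simp: chain_below_def intro: r0_trans)

lemma chain_rank_less_if_not_below:
  assumes "s \<in> S" and "(s, x) \<notin> r0"
  shows "chain_rank x < chain_rank s"
proof -
  have "chain_below x \<subseteq> chain_below s"
  proof
    fix t assume t: "t \<in> chain_below x"
    then have "(s, t) \<notin> r0"
      using assms(2) by (auto simp: chain_below_def intro: r0_trans)
    then show "t \<in> chain_below s"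
      using t S_chain assms(1) by (auto simp: chain_below_def)
  qed
  moreover have "s \<in> chain_below s - chain_below x"
    using assms S_sub r0_refl by (auto simp: chain_below_def)
  ultimately have "chain_below x \<subset> chain_below s"
    by blast
  then show ?thesis
    unfolding chain_rank_def using finite_chain_below by (rule psubset_card_mono[rotated])
qed

lemma chain_rank_strict_mono:
  "(a, b) \<in> r0 \<Longrightarrow> b \<in> S \<Longrightarrow> a \<noteq> b \<Longrightarrow> chain_rank a < chain_rank b"
  using r0_antisym by (blast intro: chain_rank_less_if_not_below)

lemma chain_rank_inj_on_S: "inj_on chain_rank S"
proof (rule inj_onI, rule ccontr)
  fix a b assume "a \<in> S" "b \<in> S" "chain_rank a = chain_rank b" "a \<noteq> b"
  with S_chain chain_rank_strict_mono[of a b] chain_rank_strict_mono[of b a] show False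
    by fastforce
qed

lemma incomp_rank_less_above:
  assumes "i \<in> incomp" and "s \<in> S" and "(i, s) \<in> r0"
  shows "chain_rank i + 1 < chain_rank s"
proof -
  obtain s0 where s0: "s0 \<in> S" "(i, s0) \<notin> r0" "(s0, i) \<notin> r0"
    using assms(1) by (auto simp: incomp_def)
  have "(s0, s) \<in> r0"
    using S_chain s0 assms r0_trans by blast
  moreover have "s0 \<noteq> s"
    using s0 assms by auto
  ultimately have "chain_rank s0 < chain_rank s"
    using chain_rank_strict_mono assms(2) by blast
  moreover have "chain_rank i < chain_rank s0"
    using s0 by (intro chain_rank_less_if_not_below)
  ultimately show ?thesis
    by simp
qed

lemma incomp_rank_less_comparable:
  assumes "i \<in> incomp" and "i' < m0" and "i' \<notin> incomp" and "(i, i') \<in> r0"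
  shows "chain_rank i < chain_rank i'"
proof -
  obtain s0 where s0: "s0 \<in> S" "(i, s0) \<notin> r0" "(s0, i) \<notin> r0"
    using assms(1) by (auto simp: incomp_def)
  have "(s0, i') \<in> r0"
    using assms s0 r0_trans by (auto simp: incomp_def)
  then have "s0 \<in> chain_below i' - chain_below i"
    using s0 by (simp add: chain_below_def)
  moreover have "chain_below i \<subseteq> chain_below i'"
    using assms(4) by (auto simp: chain_below_def intro: r0_trans)
  ultimately have "chain_below i \<subset> chain_below i'"
    by blast
  then show ?thesis
    unfolding chain_rank_def using finite_chain_below by (rule psubset_card_mono[rotated])
qed

text \<open>Take the least element of \<open>S\<close> not below \<open>i\<close>.\<close>

lemma next_chain_element:
  assumes "i \<in> incomp"
  obtains s where "s \<in> S" and "chain_rank s = chain_rank i + 1"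
proof -
  obtain s0 where "s0 \<in> S" "(s0, i) \<notin> r0"
    using assms by (auto simp: incomp_def)
  then obtain s where s: "s \<in> S" "(s, i) \<notin> r0"
    and least: "\<And>t. t \<in> S \<Longrightarrow> (t, i) \<notin> r0 \<Longrightarrow> chain_rank s \<le> chain_rank t"
    using ex_has_least_nat[where P = "\<lambda>t. t \<in> S \<and> (t, i) \<notin> r0" and m = chain_rank] by blast
  have "chain_below s = insert s (chain_below i)"
  proof (intro equalityI subsetI)
    fix t assume t: "t \<in> chain_below s"
    show "t \<in> insert s (chain_below i)"
    proof (rule ccontr)
      assume "t \<notin> insert s (chain_below i)"
      then have "chain_rank t < chain_rank s" "(t, i) \<notin> r0"
        using t s(1) by (auto simp: chain_below_def intro: chain_rank_strict_mono)
      with least[of t] t show False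
        by (auto simp: chain_below_def)
    qed
  next
    fix t assume "t \<in> insert s (chain_below i)"
    then show "t \<in> chain_below s"
      using s S_sub S_chain r0_refl r0_trans by (auto simp: chain_below_def) blast
  qed
  moreover have "s \<notin> chain_below i"
    using s by (simp add: chain_below_def)
  ultimately have "chain_rank s = chain_rank i + 1"
    using finite_chain_below by (simp add: chain_rank_def)
  with s(1) that show ?thesis
    by blast
qed

text \<open>Elements are sorted first by level: the elements of the chain \<open>C_s\<close>, \<open>s \<in> S\<close>, get level
  \<open>2 k\<close>, where \<open>k\<close> is the rank of \<open>s\<close> in \<open>S\<close>; the chains \<open>C_i\<close> of elements comparable with all
  of \<open>S\<close> fit between them at odd levels, and the chains \<open>C_i\<close> of incomparable elements share the
  level of the next element of \<open>S\<close>.\<close>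

definition level :: "nat \<Rightarrow> nat" where
  "level i = 2 * chain_rank i + (if i \<in> S then 0 else if i \<in> incomp then 2 else 1)"

lemma level_eq_imp_mem_S_iff:
  assumes "level i = level i'" and "i \<in> incomp \<longleftrightarrow> i' \<in> incomp"
  shows "i \<in> S \<longleftrightarrow> i' \<in> S"
proof -
  have parity: "x \<in> S \<longleftrightarrow> even (level x) \<and> x \<notin> incomp" for x
    using incomp_disjoint_S by (auto simp: level_def)
  show ?thesis
    unfolding parity[of i] parity[of i'] using assms by simp
qed

lemma level_mono:
  assumes "(i, i') \<in> r0" and "i \<noteq> i'"
  shows "level i < level i' \<or>
    level i = level i' \<and> i \<notin> S \<and> i' \<notin> S \<and> (i \<in> incomp \<longleftrightarrow> i' \<in> incomp)"
proof -
  have "i' < m0"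
    using r0_field assms(1) by blast
  have le: "chain_rank i \<le> chain_rank i'"
    using assms(1) by (rule chain_rank_mono)
  consider "i' \<in> S" | "i' \<notin> S" "i \<in> S" | "i' \<notin> S" "i \<notin> S"
    by blast
  then show ?thesis
  proof cases
    case 1
    then have "chain_rank i < chain_rank i'"
      using chain_rank_strict_mono assms by blast
    moreover have "i \<in> incomp \<Longrightarrow> chain_rank i + 1 < chain_rank i'"
      using incomp_rank_less_above 1 assms(1) by blast
    ultimately show ?thesis
      using 1 incomp_disjoint_S by (auto simp: level_def)
  next
    case 2
    then show ?thesis
      using le by (auto simp: level_def)
  next
    case 3
    have "i \<in> incomp \<Longrightarrow> i' \<notin> incomp \<Longrightarrow> chain_rank i < chain_rank i'"
      using incomp_rank_less_comparable \<open>i' < m0\<close> assms(1) by blast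
    then show ?thesis
      using 3 le by (auto simp: level_def)
  qed
qed

definition height :: "nat \<Rightarrow> nat" where
  "height i = card {x. x < m0 \<and> (x, i) \<in> r0}"

lemma height_strict_mono:
  assumes "(a, b) \<in> r0" and "a \<noteq> b"
  shows "height a < height b"
proof -
  have "{x. x < m0 \<and> (x, a) \<in> r0} \<subset> {x. x < m0 \<and> (x, b) \<in> r0}"
    using assms r0_trans r0_antisym r0_refl r0_field by blast
  then show ?thesis
    unfolding height_def by (intro psubset_card_mono) auto
qed

lemma height_le: "height i \<le> m0"
  unfolding height_def using card_mono[of "{..<m0}" "{x. x < m0 \<and> (x, i) \<in> r0}"] by auto

definition mfix_bound :: nat where
  "mfix_bound = Suc (\<Sum>i<m0. mfix i)"

lemma mfix_less_bound: "i < m0 \<Longrightarrow> mfix i < mfix_bound"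
  unfolding mfix_bound_def using member_le_sum[of i "{..<m0}" mfix] by simp

definition fixed_rank :: "nat \<times> nat \<Rightarrow> nat" where
  "fixed_rank p = (height (fst p) * m0 + fst p) * mfix_bound + snd p"

definition rank_bound :: nat where
  "rank_bound = (m0 + 1) * m0 * mfix_bound"

lemma fixed_rank_less: "p \<in> fixed_part \<Longrightarrow> fixed_rank p < rank_bound"
proof -
  assume "p \<in> fixed_part"
  then obtain i j where p: "p = (i, j)" "i < m0" "j < mfix i"
    by (auto simp: fixed_part_def)
  have "height i * m0 \<le> m0 * m0"
    by (rule mult_le_mono1[OF height_le])
  then have "height i * m0 + i < m0 * m0 + m0"
    using \<open>i < m0\<close> by linarith
  then have "height i * m0 + i < (m0 + 1) * m0"
    by (simp add: algebra_simps)
  moreover have "j < mfix_bound"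
    using p mfix_less_bound by (meson less_trans)
  ultimately have "(height i * m0 + i) * mfix_bound + j < ((m0 + 1) * m0) * mfix_bound + 0"
    by (rule slot_less)
  then show ?thesis
    by (simp add: fixed_rank_def rank_bound_def p)
qed

lemma fixed_rank_mono:
  assumes "(p, q) \<in> rel v" and "p \<in> fixed_part" and "q \<in> fixed_part" and "p \<noteq> q"
  shows "fixed_rank p < fixed_rank q"
proof -
  obtain i j i' j' where pq: "p = (i, j)" "q = (i', j')"
    by (cases p, cases q)
  have "i < m0" "j < mfix_bound"
    using assms(2) mfix_less_bound by (auto simp: pq fixed_part_def intro: less_trans)
  from assms(1,4) consider "i \<noteq> i'" "(i, i') \<in> r0" | "i = i'" "j < j'"
    by (auto simp: pq lexsum_rel_def)
  then show ?thesis
  proof cases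
    case 1
    then have "height i * m0 + i < height i' * m0 + i'"
      using height_strict_mono \<open>i < m0\<close> by (intro slot_less)
    then show ?thesis
      using \<open>j < mfix_bound\<close> by (simp add: fixed_rank_def pq slot_less)
  next
    case 2
    then show ?thesis
      by (simp add: fixed_rank_def pq)
  qed
qed

lemma fixed_rank_inj: "inj_on fixed_rank fixed_part"
proof (rule inj_onI)
  fix p q assume "p \<in> fixed_part" "q \<in> fixed_part" and eq: "fixed_rank p = fixed_rank q"
  obtain i j i' j' where pq: "p = (i, j)" "q = (i', j')"
    by (cases p, cases q)
  have bounds: "i < m0" "i' < m0" "j < mfix_bound" "j' < mfix_bound"
    using \<open>p \<in> fixed_part\<close> \<open>q \<in> fixed_part\<close> mfix_less_bound
    by (auto simp: pq fixed_part_def intro: less_trans)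
  from eq have "fixed_rank p mod mfix_bound = fixed_rank q mod mfix_bound"
    "fixed_rank p div mfix_bound = fixed_rank q div mfix_bound"
    by simp_all
  then have "j = j'" "height i * m0 + i = height i' * m0 + i'"
    using bounds by (simp_all add: fixed_rank_def pq)
  then have "j = j'" "(height i * m0 + i) mod m0 = (height i' * m0 + i') mod m0"
    by simp_all
  then show "p = q"
    using bounds by (simp add: pq)
qed

text \<open>For every choice \<open>c\<close> of a slot
  \<open>c p < u\<close> per free element \<open>p\<close>, the element \<open>p\<close> is placed right after the element
  \<open>fixed_rank p * u + c p\<close> of the chain of the next element of \<open>S\<close>; the other elements are placed
  by level and then by their fixed rank or position in their chain.\<close>

definition long_chains :: "nat \<Rightarrow> nat \<Rightarrow> nat" where
  "long_chains u = (\<lambda>_. (rank_bound + 1) * u)"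

definition key :: "nat \<Rightarrow> (nat \<times> nat \<Rightarrow> nat) \<Rightarrow> nat \<times> nat \<Rightarrow> nat \<times> nat \<times> nat" where
  "key u c p = (level (fst p),
     if fst p \<in> S then snd p else if fst p \<in> incomp then fixed_rank p * u + c p else fixed_rank p,
     if fst p \<in> incomp then 1 else 0)"

lemma mem_elems_long_chains:
  "(i, j) \<in> elems (long_chains u) \<longleftrightarrow> i \<in> S \<and> j < (rank_bound + 1) * u \<or> (i, j) \<in> fixed_part"
  using S_sub by (auto simp: lexsum_carrier_def fixed_part_def sizes_def long_chains_def)

lemma key_less_if_fixed_rank_less:
  assumes slots: "\<forall>p\<in>free_part. c p < u" and "p \<in> fixed_part" and "q \<in> fixed_part"
    and "level (fst p) = level (fst q)" and "fst p \<in> incomp \<longleftrightarrow> fst q \<in> incomp"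
    and "fixed_rank p < fixed_rank q"
  shows "key u c p < key u c q"
proof (cases "fst p \<in> incomp")
  case True
  then have "c p < u"
    using slots \<open>p \<in> fixed_part\<close> by (cases p) (auto simp: free_part_def fixed_part_def)
  then have "fixed_rank p * u + c p < fixed_rank q * u + c q"
    using \<open>fixed_rank p < fixed_rank q\<close> by (intro slot_less)
  with True assms(2-5) show ?thesis
    by (auto simp: key_def fixed_part_def)
next
  case False
  with assms(2-6) show ?thesis
    by (auto simp: key_def fixed_part_def)
qed

lemma key_mono:
  assumes slots: "\<forall>p\<in>free_part. c p < u"
    and "(p, q) \<in> rel (long_chains u)" and "p \<noteq> q"
  shows "key u c p < key u c q"
proof -
  obtain i j i' j' where pq: "p = (i, j)" "q = (i', j')"
    by (cases p, cases q)
  have elems: "p \<in> elems (long_chains u)" "q \<in> elems (long_chains u)"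
    using assms(2) by (auto simp: lexsum_rel_def)
  from assms(2,3) consider "i = i'" "j < j'" | "i \<noteq> i'" "(i, i') \<in> r0"
    by (auto simp: pq lexsum_rel_def)
  then show ?thesis
  proof cases
    case 1
    show ?thesis
    proof (cases "i \<in> S")
      case True
      with 1 show ?thesis
        by (simp add: key_def pq)
    next
      case False
      then have "p \<in> fixed_part" "q \<in> fixed_part"
        using elems 1 by (auto simp: pq mem_elems_long_chains)
      with 1 show ?thesis
        using assms fixed_rank_mono by (intro key_less_if_fixed_rank_less) (auto simp: pq)
    qed
  next
    case 2
    from level_mono[OF 2(2,1)] show ?thesis
    proof
      assume "level i < level i'"
      then show ?thesis
        by (simp add: key_def pq)
    next
      assume same: "level i = level i' \<and> i \<notin> S \<and> i' \<notin> S \<and> (i \<in> incomp \<longleftrightarrow> i' \<in> incomp)"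
      then have "p \<in> fixed_part" "q \<in> fixed_part"
        using elems by (auto simp: pq mem_elems_long_chains)
      with same show ?thesis
        using assms fixed_rank_mono by (intro key_less_if_fixed_rank_less) (auto simp: pq)
    qed
  qed
qed

lemma key_inj:
  assumes slots: "\<forall>p\<in>free_part. c p < u"
  shows "inj_on (key u c) (elems (long_chains u))"
proof (rule inj_onI)
  fix p q assume p: "p \<in> elems (long_chains u)" and q: "q \<in> elems (long_chains u)"
    and eq: "key u c p = key u c q"
  obtain i j i' j' where pq: "p = (i, j)" "q = (i', j')"
    by (cases p, cases q)
  have level: "level i = level i'" and incomp: "i \<in> incomp \<longleftrightarrow> i' \<in> incomp"
    using eq by (auto simp: key_def pq split: if_splits)
  then have S: "i \<in> S \<longleftrightarrow> i' \<in> S"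
    by (rule level_eq_imp_mem_S_iff)
  have rank_eq: "p = q" if "p \<in> fixed_part" "q \<in> fixed_part" "fixed_rank p = fixed_rank q"
    using fixed_rank_inj that by (auto dest: inj_onD)
  show "p = q"
  proof (cases "i \<in> S")
    case True
    then have "chain_rank i = chain_rank i'" "j = j'"
      using eq level S by (auto simp: key_def level_def pq)
    then show ?thesis
      using True S chain_rank_inj_on_S by (auto simp: pq dest: inj_onD)
  next
    case False
    then have fixed: "p \<in> fixed_part" "q \<in> fixed_part"
      using p q S by (auto simp: pq mem_elems_long_chains)
    show ?thesis
    proof (cases "i \<in> incomp")
      case True
      then have "c p < u" "c q < u"
        using slots fixed incomp by (auto simp: pq free_part_def fixed_part_def)
      moreover have "fixed_rank p * u + c p = fixed_rank q * u + c q"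
        using eq True False incomp S by (simp add: key_def pq)
      ultimately have "fixed_rank p = fixed_rank q"
        by (metis less_irrefl nat_neq_iff slot_less)
      then show ?thesis
        using rank_eq fixed by blast
    next
      case False
      then have "fixed_rank p = fixed_rank q"
        using eq \<open>i \<notin> S\<close> incomp S by (simp add: key_def pq)
      then show ?thesis
        using rank_eq fixed by blast
    qed
  qed
qed

definition lin_ext_of_slots :: "nat \<Rightarrow> (nat \<times> nat \<Rightarrow> nat) \<Rightarrow> (nat \<times> nat) rel" where
  "lin_ext_of_slots u c =
     {(p, q). p \<in> elems (long_chains u) \<and> q \<in> elems (long_chains u) \<and> key u c p \<le> key u c q}"

lemma lin_ext_of_slots_mem:
  assumes "\<forall>p\<in>free_part. c p < u"
  shows "lin_ext_of_slots u c \<in> lin_exts (long_chains u)"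
proof -
  have "rel (long_chains u) \<subseteq> elems (long_chains u) \<times> elems (long_chains u)"
    by (auto simp: lexsum_rel_def)
  moreover have "\<forall>(p, q)\<in>rel (long_chains u). p \<noteq> q \<longrightarrow> key u c p < key u c q"
    using key_mono[OF assms] by blast
  ultimately show ?thesis
    using linear_extension_of_injective_key[OF key_inj[OF assms]]
    by (simp add: lin_exts_def lin_ext_of_slots_def)
qed

lemma lin_ext_of_slots_separate:
  assumes "p \<in> free_part" and "c p < u" and "c p < c' p"
  shows "lin_ext_of_slots u c \<noteq> lin_ext_of_slots u c'"
proof -
  obtain i j where ij: "p = (i, j)" "i \<in> incomp" "j < mfix i"
    using assms(1) by (auto simp: free_part_def)
  obtain s where s: "s \<in> S" "chain_rank s = chain_rank i + 1"
    using next_chain_element[OF \<open>i \<in> incomp\<close>] by blast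
  have "p \<in> fixed_part"
    using assms(1) free_part_subset by blast
  define q where "q = (s, fixed_rank p * u + c p + 1)"
  have "fixed_rank p + 1 \<le> rank_bound"
    using fixed_rank_less[OF \<open>p \<in> fixed_part\<close>] by simp
  then have "(fixed_rank p + 1) * u \<le> rank_bound * u"
    by (rule mult_le_mono1)
  then have "q \<in> elems (long_chains u)"
    using s \<open>c p < u\<close> by (simp add: q_def mem_elems_long_chains algebra_simps)
  moreover have "p \<in> elems (long_chains u)"
    using \<open>p \<in> fixed_part\<close> ij by (simp add: mem_elems_long_chains)
  moreover have "level s = level i"
    using s ij incomp_disjoint_S by (simp add: level_def)
  ultimately have "(q, p) \<notin> lin_ext_of_slots u c" "(q, p) \<in> lin_ext_of_slots u c'"
    using s ij assms(3) incomp_disjoint_S by (auto simp: lin_ext_of_slots_def key_def q_def)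
  then show ?thesis
    by blast
qed

lemma lin_ext_of_slots_inj: "inj_on (lin_ext_of_slots u) (free_part \<rightarrow>\<^sub>E {..<u})"
proof (rule inj_onI, rule ccontr)
  fix c c' assume c: "c \<in> free_part \<rightarrow>\<^sub>E {..<u}" and c': "c' \<in> free_part \<rightarrow>\<^sub>E {..<u}"
    and eq: "lin_ext_of_slots u c = lin_ext_of_slots u c'" and "c \<noteq> c'"
  then obtain p where p: "p \<in> free_part" "c p \<noteq> c' p"
    by (metis PiE_ext)
  then consider "c p < c' p" | "c' p < c p"
    by linarith
  then show False
  proof cases
    case 1
    have "c p < u"
      using c p(1) by auto
    from lin_ext_of_slots_separate[of p c u c', OF p(1) this 1] eq show False
      by simp
  next
    case 2
    have "c' p < u"
      using c' p(1) by auto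
    from lin_ext_of_slots_separate[of p c' u c, OF p(1) this 2] eq show False
      by simp
  qed
qed

lemma card_lin_exts_ge: "u ^ (\<Sum>i\<in>incomp. mfix i) \<le> card (lin_exts (long_chains u))"
proof -
  have "u ^ (\<Sum>i\<in>incomp. mfix i) = card (free_part \<rightarrow>\<^sub>E {..<u})"
    using finite_free_part by (simp add: card_PiE card_free_part)
  also have "\<dots> \<le> card (lin_exts (long_chains u))"
  proof (rule card_inj_on_le[OF lin_ext_of_slots_inj _ finite_lin_exts])
    show "lin_ext_of_slots u ` (free_part \<rightarrow>\<^sub>E {..<u}) \<subseteq> lin_exts (long_chains u)"
      using lin_ext_of_slots_mem by auto
  qed
  finally show ?thesis .
qed

end

theorem corollary5p5:
  fixes r0 :: "(nat \<times> nat) set" and m0 :: nat and S :: "nat set"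
    and mfix :: "nat \<Rightarrow> nat" and f :: "(nat \<Rightarrow>\<^sub>0 nat) \<Rightarrow>\<^sub>0 rat"
  assumes poset: "partial_order_on {..<m0} r0"
    and S_sub: "S \<subseteq> {..<m0}"
    and S_chain: "\<forall>a\<in>S. \<forall>b\<in>S. (a, b) \<in> r0 \<or> (b, a) \<in> r0"
    and f_vars: "\<forall>\<alpha>\<in>Poly_Mapping.keys f. Poly_Mapping.keys \<alpha> \<subseteq> S"
    and f_eval: "\<forall>v :: nat \<Rightarrow> nat.
       of_nat (L_plus r0 m0 (\<lambda>i. if i \<in> S then v i else mfix i)) = mpoly_eval f (\<lambda>i. of_nat (v i))"
  shows "total_degree f =
    (\<Sum>i\<in>{i. i < m0 \<and> (\<exists>s\<in>S. (i, s) \<notin> r0 \<and> (s, i) \<notin> r0)}. mfix i)"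
proof -
  interpret lexsum_chain r0 m0 S mfix
    using poset S_sub S_chain by unfold_locales
  define D where "D = (\<Sum>i\<in>incomp. mfix i)"
  have eval: "mpoly_eval f (\<lambda>i. of_nat (v i)) = of_nat (card (lin_exts v))" for v
    using f_eval by (simp add: L_plus_def lin_exts_def sizes_def[abs_def])
  have "total_degree f \<le> D"
  proof (rule total_degree_le_of_growth[OF finite_S f_vars, rule_format])
    fix v :: "nat \<Rightarrow> nat"
    have "card (lin_exts v) \<le> 2 ^ card (fixed_part \<times> fixed_part) * (1 + (\<Sum>s\<in>S. v s)) ^ D"
      unfolding D_def by (rule card_lin_exts_le)
    then show "\<bar>mpoly_eval f (\<lambda>i. of_nat (v i))\<bar>
        \<le> of_nat (2 ^ card (fixed_part \<times> fixed_part)) * (1 + of_nat (\<Sum>s\<in>S. v s)) ^ D"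
      unfolding eval by (metis abs_of_nat of_nat_1 of_nat_add of_nat_le_iff of_nat_mult of_nat_power)
  qed
  moreover have "D \<le> total_degree f"
  proof (rule total_degree_ge_of_growth[OF finite_S f_vars, rule_format])
    fix t :: nat
    show "of_nat (t ^ D) \<le> mpoly_eval f (\<lambda>i. of_nat ((rank_bound + 1) * t))"
      using eval[of "long_chains t"] card_lin_exts_ge[of t]
      by (simp add: D_def long_chains_def)
  qed
  ultimately show ?thesis
    by (simp add: D_def incomp_def)
qed

end
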